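(* Let $d\ge 3$. Each generator $a_i$ ($1\le i\le d$) has infinite order in $G_d$.
   Context: Let $d\ge 3$, $X=\{1,\dots,d\}$, $T$ the $d$-regular rooted tree with vertex set $X^*$. $\mathrm{Aut}(T)$ is the group of root-preserving automorphisms with product left-to-right: $(gh)(u)=h(g(u))$. Sections $g|_u$ are defined by $g(uv)=g(u)\,g|_u(v)$; we write $g=(g|_1,\dots,g|_d)\lambda_g$ with $\lambda_g\in S_d$ the action on the first level; $e$ is the identity; $\overline{j}\in\{1,\dots,d\}$ denotes $j$ mod $d$. $G_d=\langle a_1,\dots,a_d\rangle\le\mathrm{Aut}(T)$ where $a_i$ acts on the first level as $(i\ \overline{i+1})$, with $a_i|_i=a_i$, $a_i|_{\overline{i+1}}=a_{\overline{i+1}}$, and $a_i|_x=e$ otherwise. *)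

theory Defs
  imports Main
begin

text \<open>Vertices of the d-regular rooted tree T are words over X = {1..d}, i.e.
  elements of lists {1..d}.  The cyclic successor of i in {1..d} (written
  overline(i+1) in the paper) is i mod d + 1.\<close>

definition csucc :: "nat \<Rightarrow> nat \<Rightarrow> nat" where
  "csucc d i = i mod d + 1"

text \<open>The generator a_i of G_d as a map on words, from the wreath recursion
  a_i = (a_i|_1,...,a_i|_d) (i csucc(i)) with a_i|_i = a_i,
  a_i|_csucc(i) = a_csucc(i), and trivial sections elsewhere, using
  g(x w) = lambda_g(x) g|_x(w).\<close>

fun gen :: "nat \<Rightarrow> nat \<Rightarrow> nat list \<Rightarrow> nat list" where
  "gen d i [] = []"
| "gen d i (x # w) =
     (if x = i then csucc d i # gen d i w
      else if x = csucc d i then i # gen d (csucc d i) w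
      else x # w)"

end

theory Submission
  imports Defs
begin

text \<open>The first letter of a word moved by a_i runs through the 2-cycle (i s), where
  s = csucc d i, so odd powers of a_i move the word [i].  On words starting with s,
  a_i^2 acts as s w \<mapsto> s (a_s a_i)(w), so it remains to see that b_i = a_s a_i has
  infinite order.  The first letter moved by b_i runs through the 3-cycle (i s t),
  t = csucc d s, which for d \<ge> 3 has length exactly 3; and b_i^3 acts on words
  i t w as i t w \<mapsto> i t b_s(w).  Thus b_i^n moves [i] unless n = 3m, in which case
  it moves i t w whenever b_s^m moves w, and strong induction on n concludes.\<close>

lemma csucc_mem: "0 < d \<Longrightarrow> csucc d j \<in> {1..d}"
  by (simp add: csucc_def Suc_leI)

lemma csucc_of_mem: "j \<in> {1..d} \<Longrightarrow> csucc d j = (if j < d then j + 1 else 1)"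
  by (auto simp: csucc_def)

lemma csucc_neq: "2 \<le> d \<Longrightarrow> j \<in> {1..d} \<Longrightarrow> csucc d j \<noteq> j"
  by (auto simp: csucc_of_mem)

lemma csucc_csucc_neq: "3 \<le> d \<Longrightarrow> j \<in> {1..d} \<Longrightarrow> csucc d (csucc d j) \<noteq> j"
  using csucc_mem[of d j] by (auto simp: csucc_of_mem split: if_splits)

definition gen_pair :: "nat \<Rightarrow> nat \<Rightarrow> nat list \<Rightarrow> nat list" where
  "gen_pair d j = gen d j \<circ> gen d (csucc d j)"

lemma funpow_append_section:
  assumes "\<And>w. f (p @ w) = p @ g w"
  shows "(f ^^ m) (p @ w) = p @ (g ^^ m) w"
  by (induction m) (simp_all add: assms)

lemma funpow_Cons_head:
  assumes "\<And>x w. x \<in> A \<Longrightarrow> \<exists>w'. f (x # w) = \<sigma> x # w'"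
    and "\<sigma> ` A \<subseteq> A" and "x \<in> A"
  shows "\<exists>w'. (f ^^ n) (x # w) = (\<sigma> ^^ n) x # w'"
proof (induction n)
  case 0
  show ?case by simp
next
  case (Suc n)
  then obtain w' where "(f ^^ n) (x # w) = (\<sigma> ^^ n) x # w'" by blast
  moreover have "(\<sigma> ^^ n) x \<in> A"
    using assms(2,3) by (induction n) auto
  ultimately show ?case
    using assms(1) by fastforce
qed

lemma funpow_moves_singleton:
  assumes "\<And>x w. x \<in> A \<Longrightarrow> \<exists>w'. f (x # w) = \<sigma> x # w'"
    and "\<sigma> ` A \<subseteq> A" and "x \<in> A" and "(\<sigma> ^^ n) x \<noteq> x"
  shows "(f ^^ n) [x] \<noteq> [x]"
  using funpow_Cons_head[OF assms(1-3), of n "[]"] assms(4) by auto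

lemma gen_odd_pow_moves:
  assumes "d \<ge> 2" "i \<in> {1..d}" "odd n"
  shows "(gen d i ^^ n) [i] \<noteq> [i]"
proof -
  let ?s = "csucc d i"
  let ?\<sigma> = "\<lambda>x. if x = i then ?s else i"
  have s_neq: "?s \<noteq> i"
    using assms by (simp add: csucc_neq)
  have head: "\<exists>w'. gen d i (x # w) = ?\<sigma> x # w'" if "x \<in> {i, ?s}" for x w
    using that s_neq by auto
  have "(?\<sigma> ^^ 2) i = i"
    by (simp add: numeral_2_eq_2)
  then have "(?\<sigma> ^^ n) i = (?\<sigma> ^^ (n mod 2)) i"
    by (rule funpow_mod_eq[symmetric])
  then have "(?\<sigma> ^^ n) i \<noteq> i"
    using assms(3) s_neq by (simp add: odd_iff_mod_2_eq_one)
  moreover have "?\<sigma> ` {i, ?s} \<subseteq> {i, ?s}"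
    by auto
  ultimately show ?thesis
    using funpow_moves_singleton[where f = "gen d i" and \<sigma> = ?\<sigma>, OF head] by blast
qed

lemma gen_sq_Cons_csucc:
  assumes "d \<ge> 2" "i \<in> {1..d}"
  shows "(gen d i ^^ 2) (csucc d i # w) = csucc d i # gen_pair d i w"
  using csucc_neq[of d i] assms by (simp add: numeral_2_eq_2 gen_pair_def)

lemma gen_pair_pow_not_3_dvd_moves:
  assumes "d \<ge> 3" "j \<in> {1..d}" "\<not> 3 dvd n"
  shows "(gen_pair d j ^^ n) [j] \<noteq> [j]"
proof -
  let ?s = "csucc d j" and ?t = "csucc d (csucc d j)"
  let ?\<sigma> = "\<lambda>x. if x = j then ?s else if x = ?s then ?t else j"
  have s_mem: "?s \<in> {1..d}"
    using assms(1) by (intro csucc_mem) simp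
  have distinct: "?s \<noteq> j" "?t \<noteq> j" "?t \<noteq> ?s"
    using assms(1,2) s_mem by (simp_all add: csucc_neq csucc_csucc_neq)
  have head: "\<exists>w'. gen_pair d j (x # w) = ?\<sigma> x # w'" if "x \<in> {j, ?s, ?t}" for x w
    using that distinct by (auto simp: gen_pair_def)
  have "(?\<sigma> ^^ 3) j = j"
    using distinct by (simp add: numeral_3_eq_3)
  then have "(?\<sigma> ^^ n) j = (?\<sigma> ^^ (n mod 3)) j"
    by (rule funpow_mod_eq[symmetric])
  moreover have "n mod 3 = 1 \<or> n mod 3 = 2"
    using assms(3) by presburger
  ultimately have "(?\<sigma> ^^ n) j \<noteq> j"
    using distinct by (auto simp: numeral_2_eq_2)
  moreover have "?\<sigma> ` {j, ?s, ?t} \<subseteq> {j, ?s, ?t}"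
    by auto
  ultimately show ?thesis
    using funpow_moves_singleton[where f = "gen_pair d j" and \<sigma> = ?\<sigma>, OF head] by blast
qed

lemma gen_pair_cube_prefix:
  assumes "d \<ge> 3" "j \<in> {1..d}"
  defines "t \<equiv> csucc d (csucc d j)"
  shows "(gen_pair d j ^^ 3) ([j, t] @ w) = [j, t] @ gen_pair d (csucc d j) w"
proof -
  have s_mem: "csucc d j \<in> {1..d}"
    using assms(1) by (intro csucc_mem) simp
  have "csucc d j \<noteq> j" "t \<noteq> j" "t \<noteq> csucc d j" "csucc d t \<noteq> csucc d j"
    using assms(1,2) s_mem by (simp_all add: t_def csucc_neq csucc_csucc_neq)
  then show ?thesis
    by (simp add: numeral_3_eq_3 gen_pair_def t_def)
qed

lemma gen_pair_infinite_order:
  assumes "d \<ge> 3" "n > 0" "j \<in> {1..d}"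
  shows "\<exists>w \<in> lists {1..d}. (gen_pair d j ^^ n) w \<noteq> w"
  using assms(2,3)
proof (induction n arbitrary: j rule: less_induct)
  case (less n)
  show ?case
  proof (cases "3 dvd n")
    case False
    then show ?thesis
      using gen_pair_pow_not_3_dvd_moves[OF assms(1) less.prems(2)] less.prems(2)
      by (intro bexI[of _ "[j]"]) auto
  next
    case True
    then obtain m where n: "n = 3 * m" by blast
    let ?t = "csucc d (csucc d j)"
    have mem: "csucc d j \<in> {1..d}" "?t \<in> {1..d}"
      using assms(1) by (intro csucc_mem; simp)+
    from n less.prems(1) have "m < n" "m > 0" by auto
    then obtain w where w: "w \<in> lists {1..d}" "(gen_pair d (csucc d j) ^^ m) w \<noteq> w"
      using less.IH mem(1) by blast
    have "(gen_pair d j ^^ n) ([j, ?t] @ w) = [j, ?t] @ (gen_pair d (csucc d j) ^^ m) w"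
      unfolding n funpow_mult[symmetric]
      by (rule funpow_append_section) (rule gen_pair_cube_prefix[OF assms(1) less.prems(2)])
    then show ?thesis
      using w mem(2) less.prems(2) by (intro bexI[of _ "[j, ?t] @ w"]) auto
  qed
qed

theorem corollary3p7:
  fixes d i :: nat
  assumes "d \<ge> 3" and "i \<in> {1..d}"
  shows "\<forall>n::nat. n > 0 \<longrightarrow> (\<exists>w \<in> lists {1..d}. (gen d i ^^ n) w \<noteq> w)"
proof (intro allI impI)
  fix n :: nat
  assume "n > 0"
  have "d \<ge> 2"
    using assms(1) by simp
  show "\<exists>w \<in> lists {1..d}. (gen d i ^^ n) w \<noteq> w"
  proof (cases "even n")
    case False
    then show ?thesis
      using gen_odd_pow_moves[OF \<open>d \<ge> 2\<close> assms(2)] assms(2) by (intro bexI[of _ "[i]"]) auto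
  next
    case True
    then obtain m where n: "n = 2 * m" and "m > 0"
      using \<open>n > 0\<close> by auto
    then obtain w where w: "w \<in> lists {1..d}" "(gen_pair d i ^^ m) w \<noteq> w"
      using gen_pair_infinite_order[OF assms(1)] assms(2) by blast
    have "(gen d i ^^ n) ([csucc d i] @ w) = [csucc d i] @ (gen_pair d i ^^ m) w"
      unfolding n funpow_mult[symmetric]
      by (rule funpow_append_section) (simp add: gen_sq_Cons_csucc[OF \<open>d \<ge> 2\<close> assms(2)])
    then show ?thesis
      using w csucc_mem[of d i] assms(1) by (intro bexI[of _ "[csucc d i] @ w"]) auto
  qed
qed

end
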